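(* If $G$ is a connected $\mathcal{C}$-$\mathrm{HH}$ graph which is not a tree, then its girth satisfies $g(G)\le 6$.
   Context: The girth $g(G)$ is the minimum length of a cycle in $G$. Subgraphs are induced; a homomorphism maps edges to edges. A graph $G$ is $\mathcal{C}$-$\mathrm{HH}$ if every homomorphism from a finite connected induced subgraph of $G$ into $G$ extends to a homomorphism $G\to G$. *)

theory Defs
  imports Main "HOL-Library.Extended_Nat"
begin

definition graph :: "'a set \<Rightarrow> ('a \<Rightarrow> 'a \<Rightarrow> bool) \<Rightarrow> bool" where
  "graph V E \<longleftrightarrow> (\<forall>x y. E x y \<longrightarrow> x \<in> V \<and> y \<in> V \<and> E y x \<and> x \<noteq> y)"

definition walk :: "('a \<Rightarrow> 'a \<Rightarrow> bool) \<Rightarrow> 'a list \<Rightarrow> bool" where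
  "walk E xs \<longleftrightarrow> (\<forall>i. Suc i < length xs \<longrightarrow> E (xs ! i) (xs ! Suc i))"

definition connected_on :: "('a \<Rightarrow> 'a \<Rightarrow> bool) \<Rightarrow> 'a set \<Rightarrow> bool" where
  "connected_on E S \<longleftrightarrow> S \<noteq> {} \<and>
     (\<forall>x\<in>S. \<forall>y\<in>S. \<exists>xs. xs \<noteq> [] \<and> hd xs = x \<and> last xs = y \<and> set xs \<subseteq> S \<and> walk E xs)"

definition is_cycle :: "'a set \<Rightarrow> ('a \<Rightarrow> 'a \<Rightarrow> bool) \<Rightarrow> 'a list \<Rightarrow> bool" where
  "is_cycle V E xs \<longleftrightarrow> length xs \<ge> 3 \<and> distinct xs \<and> set xs \<subseteq> V \<and>
     (\<forall>i < length xs. E (xs ! i) (xs ! ((Suc i) mod length xs)))"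

definition acyclic_graph :: "'a set \<Rightarrow> ('a \<Rightarrow> 'a \<Rightarrow> bool) \<Rightarrow> bool" where
  "acyclic_graph V E \<longleftrightarrow> \<not> (\<exists>xs. is_cycle V E xs)"

definition is_tree :: "'a set \<Rightarrow> ('a \<Rightarrow> 'a \<Rightarrow> bool) \<Rightarrow> bool" where
  "is_tree V E \<longleftrightarrow> connected_on E V \<and> acyclic_graph V E"

text \<open>Girth: minimum length of a cycle (as an extended natural; \<infinity> if acyclic).\<close>
definition girth :: "'a set \<Rightarrow> ('a \<Rightarrow> 'a \<Rightarrow> bool) \<Rightarrow> enat" where
  "girth V E = (INF xs \<in> {xs. is_cycle V E xs}. enat (length xs))"

definition hom_on :: "('a \<Rightarrow> 'a \<Rightarrow> bool) \<Rightarrow> 'a set \<Rightarrow> 'a set \<Rightarrow> ('a \<Rightarrow> 'a) \<Rightarrow> bool" where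
  "hom_on E S V f \<longleftrightarrow> (\<forall>x\<in>S. f x \<in> V) \<and> (\<forall>x\<in>S. \<forall>y\<in>S. E x y \<longrightarrow> E (f x) (f y))"

definition C_HH :: "'a set \<Rightarrow> ('a \<Rightarrow> 'a \<Rightarrow> bool) \<Rightarrow> bool" where
  "C_HH V E \<longleftrightarrow> (\<forall>S f. S \<subseteq> V \<and> finite S \<and> connected_on E S \<and> hom_on E S V f \<longrightarrow>
     (\<exists>g. hom_on E V V g \<and> (\<forall>x\<in>S. g x = f x)))"

end

theory Submission
  imports Defs
begin

text \<open>Let x_0 ... x_(n-1) be a shortest cycle and suppose n \<ge> 7. A shortest cycle has no
  chords, so x_1 ... x_(n-1) is an induced path, and folding it back onto itself at x_k, where
  2k = n + d with d \<in> {3, 4}, is a homomorphism into the graph that fixes x_1 and sends x_(n-1)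
  to x_(d+1). An endomorphism extending it maps x_0 to a common neighbour w of x_1 and x_(d+1).
  Chordlessness keeps w off the path x_1 ... x_(d+1), which therefore closes up with w to a cycle
  of length d + 2 \<le> 6.\<close>

lemma graph_symp: "graph V E \<Longrightarrow> symp E"
  by (auto simp: graph_def symp_def)

lemma walk_take: "walk E xs \<Longrightarrow> walk E (take n xs)"
  by (simp add: walk_def)

lemma walk_drop: "walk E xs \<Longrightarrow> walk E (drop n xs)"
  by (simp add: walk_def)

lemma walk_tl: "walk E xs \<Longrightarrow> walk E (tl xs)"
  unfolding walk_def by (auto simp: nth_tl)

lemma walk_rev:
  assumes "symp E" "walk E xs"
  shows "walk E (rev xs)"
  unfolding walk_def
proof (intro allI impI)
  fix i assume i: "Suc i < length (rev xs)"
  then have "E (xs ! (length xs - Suc (Suc i))) (xs ! Suc (length xs - Suc (Suc i)))"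
    using assms(2) unfolding walk_def by simp
  moreover have "Suc (length xs - Suc (Suc i)) = length xs - Suc i"
    using i by simp
  ultimately have "E (xs ! (length xs - Suc (Suc i))) (xs ! (length xs - Suc i))"
    by simp
  then have "E (xs ! (length xs - Suc i)) (xs ! (length xs - Suc (Suc i)))"
    by (rule sympD[OF assms(1)])
  then show "E (rev xs ! i) (rev xs ! Suc i)"
    using i by (simp add: rev_nth)
qed

lemma walk_snoc: "walk E (xs @ [y]) \<longleftrightarrow> walk E xs \<and> (xs \<noteq> [] \<longrightarrow> E (last xs) y)"
proof -
  have "walk E (xs @ [y]) \<longleftrightarrow> walk E xs \<and> (\<forall>i. Suc i = length xs \<longrightarrow> E (xs ! i) y)"
    unfolding walk_def by (auto simp: nth_append less_Suc_eq)
  also have "(\<forall>i. Suc i = length xs \<longrightarrow> E (xs ! i) y) \<longleftrightarrow> (xs \<noteq> [] \<longrightarrow> E (last xs) y)"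
    by (cases xs rule: rev_cases) auto
  finally show ?thesis .
qed

lemma walk_segment:
  assumes "walk E ys" "i \<le> j" "j < length ys"
  obtains p where "p \<noteq> []" "hd p = ys ! i" "last p = ys ! j" "set p \<subseteq> set ys" "walk E p"
proof
  let ?p = "drop i (take (Suc j) ys)"
  show "?p \<noteq> []" "hd ?p = ys ! i" "last ?p = ys ! j"
    using assms(2,3) by (simp_all add: hd_drop_conv_nth last_conv_nth)
  show "set ?p \<subseteq> set ys"
    by (meson set_drop_subset set_take_subset subset_trans)
  show "walk E ?p"
    using assms(1) by (simp add: walk_drop walk_take)
qed

lemma connected_on_set_walk:
  assumes "symp E" "walk E ys" "ys \<noteq> []"
  shows "connected_on E (set ys)"
  unfolding connected_on_def
proof (intro conjI ballI)
  show "set ys \<noteq> {}"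
    using assms(3) by simp
next
  fix x y assume "x \<in> set ys" "y \<in> set ys"
  then obtain i j where ij: "i < length ys" "j < length ys" "x = ys ! i" "y = ys ! j"
    by (auto simp: in_set_conv_nth)
  show "\<exists>p. p \<noteq> [] \<and> hd p = x \<and> last p = y \<and> set p \<subseteq> set ys \<and> walk E p"
  proof (cases "i \<le> j")
    case True
    obtain p where "p \<noteq> []" "hd p = ys ! i" "last p = ys ! j" "set p \<subseteq> set ys" "walk E p"
      by (rule walk_segment[OF assms(2) True ij(2)])
    with ij show ?thesis
      by blast
  next
    case False
    then have "j \<le> i"
      by simp
    obtain p where "p \<noteq> []" "hd p = ys ! j" "last p = ys ! i" "set p \<subseteq> set ys" "walk E p"
      by (rule walk_segment[OF assms(2) \<open>j \<le> i\<close> ij(1)])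
    with ij walk_rev[OF assms(1)] show ?thesis
      by (metis hd_rev last_rev rev_is_Nil_conv set_rev)
  qed
qed

lemma cyclic_adjacency_iff_walk:
  assumes "xs \<noteq> []"
  shows "(\<forall>i < length xs. E (xs ! i) (xs ! (Suc i mod length xs))) \<longleftrightarrow>
    walk E xs \<and> E (last xs) (hd xs)"
proof -
  have ends: "last xs = xs ! (length xs - 1)" "hd xs = xs ! 0"
    using assms by (simp_all add: last_conv_nth hd_conv_nth)
  have pred: "Suc (length xs - 1) = length xs"
    using assms by simp
  show ?thesis
  proof
    assume adj: "\<forall>i < length xs. E (xs ! i) (xs ! (Suc i mod length xs))"
    show "walk E xs \<and> E (last xs) (hd xs)"
    proof
      show "walk E xs"
        unfolding walk_def using adj by (metis Suc_lessD mod_less)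
      have "E (xs ! (length xs - 1)) (xs ! (Suc (length xs - 1) mod length xs))"
        using assms by (intro adj[rule_format]) simp
      then show "E (last xs) (hd xs)"
        unfolding pred by (simp add: ends)
    qed
  next
    assume walk: "walk E xs \<and> E (last xs) (hd xs)"
    show "\<forall>i < length xs. E (xs ! i) (xs ! (Suc i mod length xs))"
    proof (intro allI impI)
      fix i assume i: "i < length xs"
      show "E (xs ! i) (xs ! (Suc i mod length xs))"
      proof (cases "Suc i < length xs")
        case True
        then show ?thesis
          using walk by (simp add: walk_def)
      next
        case False
        then have "Suc i = length xs"
          using i by simp
        then have "i = length xs - 1" "Suc i mod length xs = 0"
          by simp_all
        then show ?thesis
          using walk ends by simp
      qed
    qed
  qed
qed

lemma is_cycle_iff_walk:
  "is_cycle V E xs \<longleftrightarrow>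
     3 \<le> length xs \<and> distinct xs \<and> set xs \<subseteq> V \<and> walk E xs \<and> E (last xs) (hd xs)"
proof (cases "xs = []")
  case False
  then show ?thesis
    unfolding is_cycle_def using cyclic_adjacency_iff_walk[OF False] by blast
qed (simp add: is_cycle_def)

definition shortest_cycle :: "'a set \<Rightarrow> ('a \<Rightarrow> 'a \<Rightarrow> bool) \<Rightarrow> 'a list \<Rightarrow> bool" where
  "shortest_cycle V E xs \<longleftrightarrow> is_cycle V E xs \<and> (\<forall>ys. is_cycle V E ys \<longrightarrow> length xs \<le> length ys)"

lemma shortest_cycle_exists:
  assumes "is_cycle V E ys"
  obtains xs where "shortest_cycle V E xs"
  using ex_has_least_nat[of "is_cycle V E" ys length] assms unfolding shortest_cycle_def by blast

lemma girth_le_length: "is_cycle V E xs \<Longrightarrow> girth V E \<le> enat (length xs)"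
  unfolding girth_def by (rule INF_lower) simp

lemma shortest_cycle_chordless:
  assumes "symp E" "shortest_cycle V E xs" "i < j" "j < length xs" "E (xs ! i) (xs ! j)"
  shows "j = Suc i \<or> (i = 0 \<and> j = length xs - 1)"
proof (rule ccontr)
  assume chord: "\<not> ?thesis"
  have cyc: "is_cycle V E xs" and minimal: "\<forall>zs. is_cycle V E zs \<longrightarrow> length xs \<le> length zs"
    using assms(2) unfolding shortest_cycle_def by auto
  define ys where "ys = drop i (take (Suc j) xs)"
  have len: "length ys = Suc j - i"
    using assms(4) unfolding ys_def by simp
  have "is_cycle V E ys"
    unfolding is_cycle_iff_walk
  proof (intro conjI)
    show "3 \<le> length ys"
      using len chord assms(3) by auto
    show "distinct ys" "set ys \<subseteq> V"
      using cyc unfolding ys_def is_cycle_def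
      by (auto dest: in_set_dropD in_set_takeD)
    show "walk E ys"
      using cyc unfolding ys_def is_cycle_iff_walk by (simp add: walk_drop walk_take)
    have "hd ys = xs ! i" "last ys = xs ! j"
      using assms(3,4) unfolding ys_def by (simp_all add: hd_drop_conv_nth last_conv_nth)
    then show "E (last ys) (hd ys)"
      using sympD[OF assms(1,5)] by simp
  qed
  moreover have "length ys < length xs"
    using len chord assms(3,4) by auto
  ultimately show False
    using minimal by fastforce
qed

lemma shortest_cycle_adj_iff:
  assumes "graph V E" "shortest_cycle V E xs"
    and "0 < i" "i < length xs" "0 < j" "j < length xs"
  shows "E (xs ! i) (xs ! j) \<longleftrightarrow> Suc i = j \<or> Suc j = i"
proof
  have symp: "symp E"
    using assms(1) by (rule graph_symp)
  assume e: "E (xs ! i) (xs ! j)"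
  have "i \<noteq> j"
    using e assms(1) unfolding graph_def by auto
  then consider "i < j" | "j < i"
    by linarith
  then show "Suc i = j \<or> Suc j = i"
  proof cases
    case 1
    then show ?thesis
      using shortest_cycle_chordless[OF symp assms(2) 1 assms(6) e] assms(3) by auto
  next
    case 2
    then show ?thesis
      using shortest_cycle_chordless[OF symp assms(2) 2 assms(4) sympD[OF symp e]] assms(5)
      by auto
  qed
next
  assume "Suc i = j \<or> Suc j = i"
  moreover have "walk E xs"
    using assms(2) unfolding shortest_cycle_def is_cycle_iff_walk by simp
  ultimately consider "E (xs ! i) (xs ! j)" | "E (xs ! j) (xs ! i)"
    using assms(4,6) unfolding walk_def by auto
  then show "E (xs ! i) (xs ! j)"
  proof cases
    case 2
    then show ?thesis
      by (rule sympD[OF graph_symp[OF assms(1)]])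
  qed
qed

text \<open>Since the path \<open>tl xs\<close>
  is induced, any map of positions \<open>{1..<n}\<close> that preserves adjacency of positions induces a
  homomorphism on it.\<close>

lemma shortest_cycle_reindex_hom_on:
  fixes h :: "nat \<Rightarrow> nat"
  assumes g: "graph V E" and sc: "shortest_cycle V E xs"
    and range: "\<And>i. 0 < i \<Longrightarrow> i < length xs \<Longrightarrow> 0 < h i \<and> h i < length xs"
    and adj: "\<And>i. 0 < i \<Longrightarrow> Suc i < length xs \<Longrightarrow> Suc (h i) = h (Suc i) \<or> Suc (h (Suc i)) = h i"
  shows "hom_on E (set (tl xs)) V (\<lambda>x. xs ! h (the_inv_into {..<length xs} ((!) xs) x))"
proof -
  let ?f = "\<lambda>x. xs ! h (the_inv_into {..<length xs} ((!) xs) x)"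
  have cyc: "is_cycle V E xs"
    using sc unfolding shortest_cycle_def by simp
  have f_nth: "?f (xs ! i) = xs ! h i" if "i < length xs" for i
    using cyc that by (subst the_inv_into_f_f) (auto simp: is_cycle_def intro: inj_on_nth)
  have tl_nth: "\<exists>i. 0 < i \<and> i < length xs \<and> x = xs ! i" if x: "x \<in> set (tl xs)" for x
  proof -
    obtain t where "t < length (tl xs)" "x = tl xs ! t"
      using x unfolding in_set_conv_nth by metis
    then show ?thesis
      by (intro exI[of _ "Suc t"]) (simp add: nth_tl)
  qed
  show ?thesis
    unfolding hom_on_def
  proof (intro conjI ballI impI)
    fix x assume "x \<in> set (tl xs)"
    then obtain i where "0 < i" "i < length xs" "x = xs ! i"
      using tl_nth by blast
    then show "?f x \<in> V"
      using f_nth range cyc unfolding is_cycle_def by (metis nth_mem subsetD)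
  next
    fix x y assume "x \<in> set (tl xs)" "y \<in> set (tl xs)" "E x y"
    then obtain i j where ij: "0 < i" "i < length xs" "0 < j" "j < length xs"
      and xy: "x = xs ! i" "y = xs ! j"
      using tl_nth by meson
    then have "Suc i = j \<or> Suc j = i"
      using shortest_cycle_adj_iff[OF g sc] \<open>E x y\<close> by simp
    then have "Suc (h i) = h j \<or> Suc (h j) = h i"
      using adj[of i] adj[of j] ij by auto
    then have "E (xs ! h i) (xs ! h j)"
      using shortest_cycle_adj_iff[OF g sc] range[OF ij(1,2)] range[OF ij(3,4)] by simp
    then show "E (?f x) (?f y)"
      using xy f_nth ij by simp
  qed
qed

lemma C_HH_extend:
  assumes "C_HH V E" "S \<subseteq> V" "finite S" "connected_on E S" "hom_on E S V f"
  obtains g where "hom_on E V V g" "\<forall>x\<in>S. g x = f x"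
  using assms unfolding C_HH_def by blast

definition fold_at :: "nat \<Rightarrow> nat \<Rightarrow> nat" where
  "fold_at k i = (if i \<le> k then i else 2 * k - i)"

lemma fold_at_Suc:
  assumes "Suc i \<le> 2 * k"
  shows "Suc (fold_at k i) = fold_at k (Suc i) \<or> Suc (fold_at k (Suc i)) = fold_at k i"
  using assms unfolding fold_at_def by auto

lemma C_HH_shortest_cycle_fold:
  assumes g: "graph V E" and hh: "C_HH V E" and sc: "shortest_cycle V E xs"
    and k: "length xs \<le> 2 * k" "k < length xs"
  obtains w where "E w (xs ! 1)" "E w (xs ! (2 * k - length xs + 1))"
proof -
  let ?n = "length xs"
  let ?f = "\<lambda>x. xs ! fold_at k (the_inv_into {..<?n} ((!) xs) x)"
  have cyc: "is_cycle V E xs"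
    using sc unfolding shortest_cycle_def by simp
  then have n: "3 \<le> ?n" and dist: "distinct xs" and walk: "walk E xs"
    and closing: "E (last xs) (hd xs)" and sub: "set xs \<subseteq> V"
    unfolding is_cycle_iff_walk by auto
  have hom: "hom_on E (set (tl xs)) V ?f"
  proof (rule shortest_cycle_reindex_hom_on[OF g sc])
    fix i assume "0 < i" "i < ?n"
    then show "0 < fold_at k i \<and> fold_at k i < ?n"
      using k unfolding fold_at_def by auto
  next
    fix i assume "0 < i" "Suc i < ?n"
    then show "Suc (fold_at k i) = fold_at k (Suc i) \<or> Suc (fold_at k (Suc i)) = fold_at k i"
      using k by (intro fold_at_Suc) auto
  qed
  have "tl xs \<noteq> []"
    using n by (cases xs) auto
  with graph_symp[OF g] walk_tl[OF walk] have conn: "connected_on E (set (tl xs))"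
    by (rule connected_on_set_walk)
  have "set (tl xs) \<subseteq> V"
    using sub by (cases xs) auto
  then obtain gg where gg: "hom_on E V V gg" and ext: "\<forall>x\<in>set (tl xs). gg x = ?f x"
    by (rule C_HH_extend[OF hh _ finite_set conn hom])
  have gg_nth: "gg (xs ! i) = xs ! fold_at k i" if "0 < i" "i < ?n" for i
  proof -
    have "xs ! i \<in> set (tl xs)"
      using that by (auto simp: in_set_conv_nth nth_tl intro!: exI[of _ "i - 1"])
    moreover have "the_inv_into {..<?n} ((!) xs) (xs ! i) = i"
      using dist that by (intro the_inv_into_f_f inj_on_nth) auto
    ultimately show ?thesis
      using ext by simp
  qed
  have "xs \<noteq> []"
    using n by auto
  then have "E (xs ! 0) (xs ! 1)" "E (xs ! (?n - 1)) (xs ! 0)"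
    using walk closing n unfolding walk_def by (simp_all add: last_conv_nth hd_conv_nth)
  moreover have "xs ! 0 \<in> V" "xs ! 1 \<in> V" "xs ! (?n - 1) \<in> V"
    using n by (auto intro: nth_mem[THEN subsetD[OF sub]])
  ultimately have "E (gg (xs ! 0)) (gg (xs ! 1))" "E (gg (xs ! (?n - 1))) (gg (xs ! 0))"
    using gg unfolding hom_on_def by auto
  moreover have "fold_at k 1 = 1" "fold_at k (?n - 1) = 2 * k - ?n + 1"
    using k n unfolding fold_at_def by auto
  then have "gg (xs ! 1) = xs ! 1" "gg (xs ! (?n - 1)) = xs ! (2 * k - ?n + 1)"
    using gg_nth[of 1] gg_nth[of "?n - 1"] n by simp_all
  ultimately have "E (gg (xs ! 0)) (xs ! 1)" "E (xs ! (2 * k - ?n + 1)) (gg (xs ! 0))"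
    by simp_all
  then show ?thesis
    using that sympD[OF graph_symp[OF g]] by blast
qed

lemma shortest_cycle_shortcut:
  assumes g: "graph V E" and sc: "shortest_cycle V E xs"
    and d: "3 \<le> d" "d + 1 < length xs"
    and w: "E w (xs ! 1)" "E w (xs ! (d + 1))"
  shows "is_cycle V E (drop 1 (take (d + 2) xs) @ [w])"
proof -
  let ?p = "drop 1 (take (d + 2) xs)"
  have cyc: "is_cycle V E xs"
    using sc unfolding shortest_cycle_def by simp
  have len: "length ?p = d + 1" and p_nth: "\<And>t. t < d + 1 \<Longrightarrow> ?p ! t = xs ! Suc t"
    using d by auto
  have "w \<notin> set ?p"
  proof
    assume "w \<in> set ?p"
    then obtain t where t: "t < d + 1" "w = xs ! Suc t"
      using len p_nth by (metis in_set_conv_nth)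
    then have "t = 1"
      using w(1) shortest_cycle_adj_iff[OF g sc, of "Suc t" 1] d by auto
    then show False
      using t w(2) shortest_cycle_adj_iff[OF g sc, of 2 "d + 1"] d by (auto simp: numeral_2_eq_2)
  qed
  moreover have "distinct ?p" "set ?p \<subseteq> V" "walk E ?p"
    using cyc unfolding is_cycle_iff_walk
    by (auto simp: walk_drop walk_take dest: in_set_dropD in_set_takeD)
  moreover have "w \<in> V"
    using w g unfolding graph_def by blast
  moreover have "hd ?p = xs ! 1" "last ?p = xs ! (d + 1)"
    using len p_nth by (auto simp: hd_conv_nth last_conv_nth)
  moreover have "E (xs ! (d + 1)) w"
    using graph_symp[OF g] w(2) by (rule sympD)
  ultimately show ?thesis
    unfolding is_cycle_iff_walk walk_snoc
    using len d w(1) by auto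
qed

theorem lemma5p7:
  fixes V :: "'a set" and E :: "'a \<Rightarrow> 'a \<Rightarrow> bool"
  assumes "graph V E" and "connected_on E V" and "C_HH V E" and "\<not> is_tree V E"
  shows "girth V E \<le> 6"
proof -
  obtain ys where "is_cycle V E ys"
    using assms(2,4) unfolding is_tree_def acyclic_graph_def by blast
  then obtain xs where sc: "shortest_cycle V E xs"
    by (rule shortest_cycle_exists)
  let ?n = "length xs"
  show ?thesis
  proof (cases "?n \<le> 6")
    case True
    have "girth V E \<le> enat ?n"
      using sc girth_le_length unfolding shortest_cycle_def by blast
    also have "\<dots> \<le> 6"
      using True by (simp add: numeral_eq_enat)
    finally show ?thesis .
  next
    case False
    define k where "k = (?n + 4) div 2"
    define d where "d = 2 * k - ?n"
    have k: "?n \<le> 2 * k" "k < ?n" and d: "3 \<le> d" "d \<le> 4"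
      using False unfolding k_def d_def by auto
    obtain w where "E w (xs ! 1)" "E w (xs ! (d + 1))"
      using C_HH_shortest_cycle_fold[OF assms(1,3) sc k] unfolding d_def by auto
    then have "is_cycle V E (drop 1 (take (d + 2) xs) @ [w])"
      using shortest_cycle_shortcut[OF assms(1) sc d(1)] False d(2) by auto
    then have "girth V E \<le> enat (d + 2)"
      using girth_le_length False d(2) by fastforce
    also have "\<dots> \<le> 6"
      using d(2) by (simp add: numeral_eq_enat)
    finally show ?thesis .
  qed
qed

end
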